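(* Assume $P_{XY}\in\mathcal{H}_{XY}$. Let $\Omega_u=\{\omega_1<\dots<\omega_{|\mathcal{X}|}\}\subset\{1,\dots,|\mathcal{Y}|\}$ with $M_{\Omega_u}$ invertible, and let $J_u\in\mathbb{R}^{|\mathcal{X}|}$ with $\sum_xJ_u(x)=0$ and $\sum_x|J_u(x)|\le1$. For $\epsilon>0$ let $V^*_{\Omega_u}\in\mathbb{R}^{|\mathcal{Y}|}$ be defined by $V^*_{\Omega_u}(\omega_i)=\left(M_{\Omega_u}^{-1}MP_Y+\epsilon M_{\Omega_u}^{-1}M\begin{bmatrix}P_{X|Y_1}^{-1}J_u\\0\end{bmatrix}\right)(i)$ for $1\le i\le|\mathcal{X}|$ and $V^*_{\Omega_u}(j)=0$ for $j\notin\Omega_u$, and suppose $V^*_{\Omega_u}$ is an extreme point of $\mathbb{S}_u$ for all sufficiently small $\epsilon>0$. Then, for $P_{Y|U=u}=V^*_{\Omega_u}$, as $\epsilon\to0^+$, $$H(P_{Y|U=u})=-\sum_{y=1}^{|\mathcal{Y}|}P_{Y|U=u}(y)\log P_{Y|U=u}(y)=-(b_u+\epsilon a_uJ_u)+o(\epsilon),$$ where $l_u=\left[\log\left((M_{\Omega_u}^{-1}MP_Y)(i)\right)\right]_{i=1,\dots,|\mathcal{X}|}\in\mathbb{R}^{1\times|\mathcal{X}|}$, $b_u=l_u\left(M_{\Omega_u}^{-1}MP_Y\right)$, and $a_u=l_u\left(M_{\Omega_u}^{-1}M(1\!:\!|\mathcal{X}|)P_{X|Y_1}^{-1}\right)\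in\mathbb{R}^{1\times|\mathcal{X}|}$.
   Context: Setting: $X,Y$ on finite alphabets with $|\mathcal{X}|<|\mathcal{Y}|$, joint pmf $P_{XY}$, marginal vectors $P_X,P_Y$ with positive entries. $P_{X|Y}\in\mathbb{R}^{|\mathcal{X}|\times|\mathcal{Y}|}$ has full row rank and $P_{X|Y}=[P_{X|Y_1},P_{X|Y_2}]$ with $P_{X|Y_1}$ (first $|\mathcal{X}|$ columns) invertible. With an SVD $P_{X|Y}=U\Sigma V^T$, $V=[v_1,\dots,v_{|\mathcal{Y}|}]$, set $M=[v_1,\dots,v_{|\mathcal{X}|}]^T$; $M_\Omega$ is the submatrix of $M$ with columns indexed by $\Omega$ and $M(1\!:\!|\mathcal{X}|)$ the submatrix of its first $|\mathcal{X}|$ columns. The zero block has size $|\mathcal{Y}|-|\mathcal{X}|$. $\mathbb{S}_u=\{y\in\mathbb{R}^{|\mathcal{Y}|}: My=MP_Y+\epsilon M\begin{bmatrix}P_{X|Y_1}^{-1}J_u\\0\end{bmatrix},\ y\ge0\}$. $\mathcal{H}_{XY}$ is the set of joint distributions $P_{XY}$ such that for every $\Omega\subset\{1,\dots,|\mathcal{Y}|\}$ with $|\Omega|=|\mathcal{X}|$ and $M_\Omega$ invertible, if $t_\Omega=M_\Omega^{-1}MP_Y$ lies in the probability simplex $\{x\in\mathbb{R}^{|\mathcal{X}|}_{\ge0}:\mathbf{1}^Tx=1\}$ then all entries of $t_\Omega$ are strictly positive. Convention $0\log0=0$. *)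

theory Defs
  imports "Jordan_Normal_Form.DL_Rank_Submatrix" "HOL-Library.Landau_Symbols"
begin

text \<open>Alphabets are {0..<n} (for X) and {0..<m} (for Y); a joint pmf is an n x m matrix.\<close>

definition marg_X :: "nat \<Rightarrow> nat \<Rightarrow> real mat \<Rightarrow> real vec" where
  "marg_X n m P = vec n (\<lambda>x. \<Sum>y<m. P $$ (x, y))"

definition marg_Y :: "nat \<Rightarrow> nat \<Rightarrow> real mat \<Rightarrow> real vec" where
  "marg_Y n m P = vec m (\<lambda>y. \<Sum>x<n. P $$ (x, y))"

definition cond_XY :: "nat \<Rightarrow> nat \<Rightarrow> real mat \<Rightarrow> real mat" where
  "cond_XY n m P = mat n m (\<lambda>(x, y). P $$ (x, y) / (marg_Y n m P) $ y)"

definition is_svd :: "nat \<Rightarrow> nat \<Rightarrow> real mat \<Rightarrow> real mat \<Rightarrow> real mat \<Rightarrow> real mat \<Rightarrow> bool" where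
  "is_svd n m A U S V \<longleftrightarrow>
     U \<in> carrier_mat n n \<and> S \<in> carrier_mat n m \<and> V \<in> carrier_mat m m \<and>
     U * transpose_mat U = 1\<^sub>m n \<and> transpose_mat U * U = 1\<^sub>m n \<and>
     V * transpose_mat V = 1\<^sub>m m \<and> transpose_mat V * V = 1\<^sub>m m \<and>
     (\<forall>i<n. \<forall>j<m. i \<noteq> j \<longrightarrow> S $$ (i, j) = 0) \<and>
     (\<forall>i<min n m. 0 \<le> S $$ (i, i)) \<and>
     (\<forall>i j. i \<le> j \<and> j < min n m \<longrightarrow> S $$ (j, j) \<le> S $$ (i, i)) \<and>
     A = U * S * transpose_mat V"

text \<open>M = [v_1, ..., v_n]^T, the first n columns of V, transposed (n x m).\<close>
definition M_of_V :: "nat \<Rightarrow> nat \<Rightarrow> real mat \<Rightarrow> real mat" where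
  "M_of_V n m V = mat n m (\<lambda>(i, j). V $$ (j, i))"

definition mat_inv :: "real mat \<Rightarrow> real mat" where
  "mat_inv A = (SOME B. B \<in> carrier_mat (dim_row A) (dim_row A) \<and> inverts_mat A B \<and> inverts_mat B A)"

text \<open>Submatrix consisting of the columns indexed by Omega (in increasing order).\<close>
definition col_sub :: "real mat \<Rightarrow> nat set \<Rightarrow> real mat" where
  "col_sub A \<Omega> = submatrix A UNIV \<Omega>"

definition in_simplex :: "nat \<Rightarrow> real vec \<Rightarrow> bool" where
  "in_simplex n x \<longleftrightarrow> x \<in> carrier_vec n \<and> (\<forall>i<n. 0 \<le> x $ i) \<and> (\<Sum>i<n. x $ i) = 1"

definition in_H :: "nat \<Rightarrow> nat \<Rightarrow> real mat \<Rightarrow> real mat \<Rightarrow> bool" where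
  "in_H n m P M \<longleftrightarrow>
     (\<forall>\<Omega>. \<Omega> \<subseteq> {..<m} \<and> card \<Omega> = n \<and> invertible_mat (col_sub M \<Omega>) \<longrightarrow>
        (let t = mat_inv (col_sub M \<Omega>) *\<^sub>v (M *\<^sub>v marg_Y n m P) in
          in_simplex n t \<longrightarrow> (\<forall>i<n. 0 < t $ i)))"

text \<open>Vector in R^m with entry w(i) at position omega_i (i-th smallest element of Omega), 0 elsewhere.\<close>
definition embed_on :: "nat \<Rightarrow> nat set \<Rightarrow> real vec \<Rightarrow> real vec" where
  "embed_on m \<Omega> w = vec m (\<lambda>j. if j \<in> \<Omega> then w $ card {k \<in> \<Omega>. k < j} else 0)"

definition extreme_pt :: "real vec set \<Rightarrow> real vec \<Rightarrow> bool" where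
  "extreme_pt S y \<longleftrightarrow> y \<in> S \<and>
     (\<forall>a\<in>S. \<forall>b\<in>S. \<forall>t::real. 0 < t \<and> t < 1 \<and> y = t \<cdot>\<^sub>v a + (1 - t) \<cdot>\<^sub>v b \<longrightarrow> a = b)"

definition entropy :: "real vec \<Rightarrow> real" where
  "entropy p = - (\<Sum>y<dim_vec p. if p $ y = 0 then 0 else p $ y * ln (p $ y))"

end

theory Submission
  imports Defs
begin

(* Write t = M_\<Omega>^-1 M P_Y and d = M_\<Omega>^-1 M [P_{X|Y_1}^-1 J; 0], so that V* is t + \<epsilon> d
   spread over the positions \<Omega>. Since P_{X|Y} is column stochastic, the all-ones vector lies
   in its row space, which is the row space of M; hence every point of S_u is a probability
   vector (the column sums of P_{X|Y_1}^-1 are also 1, so the perturbation has total mass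
   \<Sum> J = 0). So t + \<epsilon> d lies in the simplex for all small \<epsilon> > 0, and letting \<epsilon> \<rightarrow> 0
   shows that t lies in the simplex and that \<Sum> d = 0. Membership in H_XY makes t strictly
   positive, where x ln x is differentiable: the first-order expansion of the entropy at t
   in direction d is -(l t + \<epsilon> l d), the term \<epsilon> \<Sum> d vanishing, and l d = a_u J. *)

lemma pick_lessThan: "j < n \<Longrightarrow> pick {..<n} j = j"
proof -
  assume j: "j < n"
  have e: "{a. a < n \<and> a \<in> UNIV} = {..<n}" by auto
  have "pick UNIV j = pick {a. a < n \<and> a \<in> UNIV} j"
    by (rule pick_reduce_set) (use j e in simp)
  then show ?thesis using pick_UNIV e by simp
qed

lemma bij_betw_pick:
  assumes "finite \<Omega>" "card \<Omega> = n"
  shows "bij_betw (pick \<Omega>) {..<n} \<Omega>"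
proof (rule bij_betw_byWitness[where f' = "\<lambda>j. card {k\<in>\<Omega>. k < j}"])
  show "\<forall>a\<in>{..<n}. card {k \<in> \<Omega>. k < pick \<Omega> a} = a" using assms card_pick_le by auto
  show "\<forall>a'\<in>\<Omega>. pick \<Omega> (card {k \<in> \<Omega>. k < a'}) = a'" using pick_card_in_set by auto
  show "pick \<Omega> ` {..<n} \<subseteq> \<Omega>" using assms pick_in_set_le by auto
  show "(\<lambda>j. card {k \<in> \<Omega>. k < j}) ` \<Omega> \<subseteq> {..<n}"
  proof
    fix x assume "x \<in> (\<lambda>j. card {k \<in> \<Omega>. k < j}) ` \<Omega>"
    then obtain j where j: "j \<in> \<Omega>" "x = card {k \<in> \<Omega>. k < j}" by auto
    have "{k \<in> \<Omega>. k < j} \<subset> \<Omega>" using j by auto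
    then have "card {k \<in> \<Omega>. k < j} < card \<Omega>" using assms psubset_card_mono by blast
    then show "x \<in> {..<n}" using j assms by auto
  qed
qed

lemma sum_reindex_pick:
  fixes g :: "nat \<Rightarrow> nat \<Rightarrow> 'a::comm_monoid_add"
  assumes "\<Omega> \<subseteq> {..<m}" "card \<Omega> = n"
  shows "(\<Sum>j<m. if j \<in> \<Omega> then g j (card {k\<in>\<Omega>. k < j}) else 0) = (\<Sum>i<n. g (pick \<Omega> i) i)"
proof -
  have fin: "finite \<Omega>" using assms finite_subset by blast
  have "(\<Sum>j<m. if j \<in> \<Omega> then g j (card {k\<in>\<Omega>. k < j}) else 0) = (\<Sum>j\<in>\<Omega>. g j (card {k\<in>\<Omega>. k < j}))"
    using assms(1) by (simp add: sum.If_cases Int_absorb1 inf.absorb2)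
  also have "\<dots> = (\<Sum>i<n. g (pick \<Omega> i) (card {k\<in>\<Omega>. k < pick \<Omega> i}))"
    using sum.reindex_bij_betw[OF bij_betw_pick[OF fin assms(2)], symmetric] by simp
  also have "\<dots> = (\<Sum>i<n. g (pick \<Omega> i) i)"
    using card_pick_le assms by (intro sum.cong) auto
  finally show ?thesis .
qed

lemma embed_on_pick:
  assumes "\<Omega> \<subseteq> {..<m}" "card \<Omega> = n" "i < n"
  shows "embed_on m \<Omega> w $ pick \<Omega> i = w $ i"
proof -
  have "pick \<Omega> i \<in> \<Omega>" using assms pick_in_set_le by auto
  then show ?thesis using assms card_pick_le unfolding embed_on_def by auto
qed

lemma sum_embed_on:
  assumes "\<Omega> \<subseteq> {..<m}" "card \<Omega> = n"
  shows "(\<Sum>j<m. embed_on m \<Omega> w $ j) = (\<Sum>i<n. w $ i)"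
  using sum_reindex_pick[OF assms, of "\<lambda>j i. w $ i"] unfolding embed_on_def by simp

lemma entropy_embed_on:
  assumes "\<Omega> \<subseteq> {..<m}" "card \<Omega> = n"
  shows "entropy (embed_on m \<Omega> w) = - (\<Sum>i<n. if w $ i = 0 then 0 else w $ i * ln (w $ i))"
proof -
  have "(\<Sum>y<m. if embed_on m \<Omega> w $ y = 0 then 0 else embed_on m \<Omega> w $ y * ln (embed_on m \<Omega> w $ y))
     = (\<Sum>j<m. if j \<in> \<Omega> then (\<lambda>j i. if w $ i = 0 then 0 else w $ i * ln (w $ i)) j (card {k\<in>\<Omega>. k < j}) else 0)"
    unfolding embed_on_def by (intro sum.cong) auto
  also have "\<dots> = (\<Sum>i<n. if w $ i = 0 then 0 else w $ i * ln (w $ i))"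
    by (subst sum_reindex_pick[OF assms]) simp
  finally show ?thesis unfolding entropy_def embed_on_def by simp
qed

lemma in_simplex_embed_on:
  assumes "\<Omega> \<subseteq> {..<m}" "card \<Omega> = n" "v \<in> carrier_vec n" "in_simplex m (embed_on m \<Omega> v)"
  shows "in_simplex n v"
proof -
  have "0 \<le> v $ i" if i: "i < n" for i
  proof -
    have "pick \<Omega> i < m" using assms(1,2) i pick_in_set_le by auto
    then show ?thesis using assms(4) embed_on_pick[OF assms(1,2) i] unfolding in_simplex_def by metis
  qed
  moreover have "(\<Sum>i<n. v $ i) = 1"
    using sum_embed_on[OF assms(1,2)] assms(4) unfolding in_simplex_def by simp
  ultimately show ?thesis using assms(3) unfolding in_simplex_def by blast
qed

lemma sum_zero_extend:
  fixes g :: "nat \<Rightarrow> 'a::comm_monoid_add"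
  assumes "k \<le> m"
  shows "(\<Sum>j<m. if j < k then g j else 0) = (\<Sum>j<k. g j)"
proof -
  have "(\<Sum>j<m. if j < k then g j else 0) = (\<Sum>j\<in>{..<m} \<inter> {j. j < k}. g j)"
    by (simp add: sum.inter_restrict)
  also have "{..<m} \<inter> {j. j < k} = {..<k}" using assms by auto
  finally show ?thesis .
qed

lemma col_sub_carrier:
  assumes "A \<in> carrier_mat n m" "\<Omega> \<subseteq> {..<m}" "card \<Omega> = k"
  shows "col_sub A \<Omega> \<in> carrier_mat n k"
proof -
  have "{j. j < m \<and> j \<in> \<Omega>} = \<Omega>" using assms by auto
  then show ?thesis using assms unfolding col_sub_def submatrix_def by auto
qed

lemma col_sub_index:
  assumes "A \<in> carrier_mat n m" "\<Omega> \<subseteq> {..<m}" "card \<Omega> = k" "i < n" "j < k"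
  shows "col_sub A \<Omega> $$ (i, j) = A $$ (i, pick \<Omega> j)"
proof -
  have "{j. j < m \<and> j \<in> \<Omega>} = \<Omega>" using assms by auto
  then show ?thesis using assms unfolding col_sub_def submatrix_def by (auto simp: pick_UNIV)
qed

lemma mult_mat_vec_zero_extend:
  assumes A: "A \<in> carrier_mat n m" and "k \<le> m" and v: "v \<in> carrier_vec k"
  shows "A *\<^sub>v vec m (\<lambda>j. if j < k then v $ j else 0) = col_sub A {..<k} *\<^sub>v v"
proof
  have Ak: "col_sub A {..<k} \<in> carrier_mat n k" using col_sub_carrier[OF A] \<open>k \<le> m\<close> by auto
  then show "dim_vec (A *\<^sub>v vec m (\<lambda>j. if j < k then v $ j else 0)) = dim_vec (col_sub A {..<k} *\<^sub>v v)"
    using A by simp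
  fix i assume "i < dim_vec (col_sub A {..<k} *\<^sub>v v)"
  then have i: "i < n" using Ak by simp
  have "(A *\<^sub>v vec m (\<lambda>j. if j < k then v $ j else 0)) $ i = (\<Sum>j<m. A $$ (i, j) * (if j < k then v $ j else 0))"
    using A i by (simp add: scalar_prod_def lessThan_atLeast0)
  also have "\<dots> = (\<Sum>j<m. if j < k then A $$ (i, j) * v $ j else 0)" by (intro sum.cong) auto
  also have "\<dots> = (\<Sum>j<k. A $$ (i, j) * v $ j)" by (rule sum_zero_extend[OF \<open>k \<le> m\<close>])
  also have "\<dots> = (col_sub A {..<k} *\<^sub>v v) $ i"
    using Ak A i v \<open>k \<le> m\<close> col_sub_index[OF A, of "{..<k}" k i] pick_lessThan
    by (simp add: scalar_prod_def lessThan_atLeast0)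
  finally show "(A *\<^sub>v vec m (\<lambda>j. if j < k then v $ j else 0)) $ i = (col_sub A {..<k} *\<^sub>v v) $ i" .
qed

lemma mat_inv_correct:
  assumes "invertible_mat A" "A \<in> carrier_mat n n"
  shows "mat_inv A \<in> carrier_mat n n" "A * mat_inv A = 1\<^sub>m n"
proof -
  obtain B where B: "inverts_mat A B" "inverts_mat B A" using assms unfolding invertible_mat_def by auto
  have "dim_col (A * B) = dim_col (1\<^sub>m (dim_row A) :: real mat)" using B unfolding inverts_mat_def by simp
  then have c: "dim_col B = n" using assms by simp
  have "dim_col (B * A) = dim_col (1\<^sub>m (dim_row B) :: real mat)" using B unfolding inverts_mat_def by simp
  then have r: "dim_row B = n" using assms by simp
  have "B \<in> carrier_mat n n" using c r by auto
  then have ex: "\<exists>B. B \<in> carrier_mat (dim_row A) (dim_row A) \<and> inverts_mat A B \<and> inverts_mat B A"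
    using B assms by auto
  have "mat_inv A \<in> carrier_mat (dim_row A) (dim_row A) \<and> inverts_mat A (mat_inv A)"
    unfolding mat_inv_def using someI_ex[OF ex] by blast
  then show "mat_inv A \<in> carrier_mat n n" "A * mat_inv A = 1\<^sub>m n"
    using assms unfolding inverts_mat_def by auto
qed

lemma sum_mult_mat_vec:
  fixes A :: "'a::comm_semiring_1 mat"
  assumes "A \<in> carrier_mat n k" "v \<in> carrier_vec k"
  shows "(\<Sum>i<n. (A *\<^sub>v v) $ i) = (\<Sum>j<k. (\<Sum>i<n. A $$ (i, j)) * v $ j)"
proof -
  have "(\<Sum>i<n. (A *\<^sub>v v) $ i) = (\<Sum>i<n. \<Sum>j<k. A $$ (i, j) * v $ j)"
    using assms by (intro sum.cong) (auto simp: scalar_prod_def lessThan_atLeast0)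
  also have "\<dots> = (\<Sum>j<k. (\<Sum>i<n. A $$ (i, j)) * v $ j)"
    by (subst sum.swap) (simp add: sum_distrib_right)
  finally show ?thesis .
qed

lemma sum_mult_mat_vec_col_stochastic:
  fixes A :: "'a::comm_semiring_1 mat"
  assumes "A \<in> carrier_mat n k" "v \<in> carrier_vec k" "\<forall>j<k. (\<Sum>i<n. A $$ (i, j)) = 1"
  shows "(\<Sum>i<n. (A *\<^sub>v v) $ i) = (\<Sum>j<k. v $ j)"
proof -
  have "(\<Sum>j<k. (\<Sum>i<n. A $$ (i, j)) * v $ j) = (\<Sum>j<k. v $ j)"
    using assms(3) by (intro sum.cong) auto
  then show ?thesis using sum_mult_mat_vec[OF assms(1,2)] by simp
qed

lemma col_stochastic_mat_inv:
  assumes A: "A \<in> carrier_mat n n" "invertible_mat A" and col_sum: "\<forall>j<n. (\<Sum>i<n. A $$ (i, j)) = 1"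
  shows "\<forall>j<n. (\<Sum>i<n. mat_inv A $$ (i, j)) = 1"
proof (intro allI impI)
  fix j assume j: "j < n"
  note inv = mat_inv_correct[OF A(2,1)]
  have "A *\<^sub>v col (mat_inv A) j = col (1\<^sub>m n) j"
    using col_mult2[OF A(1) inv(1) j] inv(2) by simp
  then have "(\<Sum>i<n. mat_inv A $$ (i, j)) = (\<Sum>i<n. col (1\<^sub>m n) j $ i)"
    using sum_mult_mat_vec_col_stochastic[OF A(1) col_carrier_vec[OF j inv(1)] col_sum] inv(1) j
    by (simp add: lessThan_atLeast0)
  also have "\<dots> = (\<Sum>i<n. if i = j then 1 else 0)" using j by (intro sum.cong) auto
  finally show "(\<Sum>i<n. mat_inv A $$ (i, j)) = 1" using j by simp
qed

lemma sum_mat_inv_mult_vec_col_stochastic: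
  assumes "A \<in> carrier_mat n n" "invertible_mat A" "\<forall>j<n. (\<Sum>i<n. A $$ (i, j)) = 1" "v \<in> carrier_vec n"
  shows "(\<Sum>i<n. (mat_inv A *\<^sub>v v) $ i) = (\<Sum>i<n. v $ i)"
  using sum_mult_mat_vec_col_stochastic[OF mat_inv_correct(1)[OF assms(2,1)] assms(4)
      col_stochastic_mat_inv[OF assms(1-3)]] .

lemma col_stochastic_col_sub:
  assumes "A \<in> carrier_mat n m" "\<Omega> \<subseteq> {..<m}" "card \<Omega> = k" "\<forall>j<m. (\<Sum>i<n. A $$ (i, j)) = 1"
  shows "\<forall>j<k. (\<Sum>i<n. col_sub A \<Omega> $$ (i, j)) = 1"
proof (intro allI impI)
  fix j assume j: "j < k"
  have "pick \<Omega> j < m" using assms(2,3) j pick_in_set_le by auto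
  then show "(\<Sum>i<n. col_sub A \<Omega> $$ (i, j)) = 1" using col_sub_index[OF assms(1-3) _ j] assms(4) by simp
qed

lemma scalar_prod_cols_mult_col_sub:
  assumes L: "L \<in> carrier_vec r" and B: "B \<in> carrier_mat r n" and M: "M \<in> carrier_mat n m"
    and Q: "Q \<in> carrier_mat k l" and v: "v \<in> carrier_vec l" and "k \<le> m"
  shows "vec l (\<lambda>j. L \<bullet> col (B * col_sub M {..<k} * Q) j) \<bullet> v
    = L \<bullet> (B *\<^sub>v (M *\<^sub>v vec m (\<lambda>j. if j < k then (Q *\<^sub>v v) $ j else 0)))"
proof -
  have Mk: "col_sub M {..<k} \<in> carrier_mat n k" using col_sub_carrier[OF M, of "{..<k}" k] \<open>k \<le> m\<close> by simp
  have A: "B * col_sub M {..<k} * Q \<in> carrier_mat r l" using B Mk Q by simp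
  have "(B * col_sub M {..<k} * Q) *\<^sub>v v = B *\<^sub>v (col_sub M {..<k} *\<^sub>v (Q *\<^sub>v v))"
    by (rule trans[OF assoc_mult_mat_vec[OF mult_carrier_mat[OF B Mk] Q v]
          assoc_mult_mat_vec[OF B Mk mult_mat_vec_carrier[OF Q v]]])
  also have "\<dots> = B *\<^sub>v (M *\<^sub>v vec m (\<lambda>j. if j < k then (Q *\<^sub>v v) $ j else 0))"
    using mult_mat_vec_zero_extend[OF M \<open>k \<le> m\<close> mult_mat_vec_carrier[OF Q v]] by simp
  finally show ?thesis
    using assoc_scalar_prod[OF L A v] carrier_matD[OF A] unfolding mult_mat_vec_def by simp
qed

(* S is diagonal with only n rows, so only the first n columns of V, i.e. the rows of M, enter. *)
lemma svd_eq_mult_M_of_V: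
  assumes "is_svd n m A U S V" "n \<le> m"
  shows "A = U * mat n n (\<lambda>(i, j). S $$ (i, j)) * M_of_V n m V"
proof -
  have U: "U \<in> carrier_mat n n" and S: "S \<in> carrier_mat n m" and V: "V \<in> carrier_mat m m"
    and diag: "\<forall>i<n. \<forall>j<m. i \<noteq> j \<longrightarrow> S $$ (i, j) = 0"
    and A: "A = U * S * transpose_mat V" using assms(1) unfolding is_svd_def by auto
  let ?D = "mat n n (\<lambda>(i, j). S $$ (i, j))"
  have "S * transpose_mat V = ?D * M_of_V n m V"
  proof (rule eq_matI)
    fix l j assume "l < dim_row (?D * M_of_V n m V)" "j < dim_col (?D * M_of_V n m V)"
    then have l: "l < n" and j: "j < m" by (simp_all add: M_of_V_def)
    have "(S * transpose_mat V) $$ (l, j) = (\<Sum>k<m. S $$ (l, k) * V $$ (j, k))"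
      using S V l j by (simp add: scalar_prod_def lessThan_atLeast0)
    also have "\<dots> = (\<Sum>k<m. if k = l then S $$ (l, l) * V $$ (j, l) else 0)"
      using diag l by (intro sum.cong) auto
    also have "\<dots> = (\<Sum>k<n. if k = l then S $$ (l, l) * V $$ (j, l) else 0)"
      using l assms(2) by simp
    also have "\<dots> = (\<Sum>k<n. S $$ (l, k) * V $$ (j, k))"
      using diag l j assms(2) by (intro sum.cong) auto
    also have "\<dots> = (?D * M_of_V n m V) $$ (l, j)"
      using l j by (auto simp: M_of_V_def scalar_prod_def lessThan_atLeast0 intro!: sum.cong)
    finally show "(S * transpose_mat V) $$ (l, j) = (?D * M_of_V n m V) $$ (l, j)" .
  qed (use S V in \<open>simp_all add: M_of_V_def\<close>)
  then show ?thesis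
    using A U S V assoc_mult_mat[of U n n ?D n "M_of_V n m V" m] by (simp add: M_of_V_def)
qed

lemma cond_XY_col_stochastic:
  assumes "\<forall>y<m. 0 < marg_Y n m P $ y"
  shows "\<forall>j<m. (\<Sum>i<n. cond_XY n m P $$ (i, j)) = 1"
proof (intro allI impI)
  fix j assume j: "j < m"
  have "(\<Sum>i<n. cond_XY n m P $$ (i, j)) = (\<Sum>i<n. P $$ (i, j)) / marg_Y n m P $ j"
    unfolding sum_divide_distrib using j by (intro sum.cong) (auto simp: cond_XY_def)
  also have "\<dots> = 1"
    using assms j unfolding marg_Y_def by (metis index_vec div_self less_irrefl)
  finally show "(\<Sum>i<n. cond_XY n m P $$ (i, j)) = 1" .
qed

lemma sum_marg_Y: "(\<Sum>j<m. marg_Y n m P $ j) = (\<Sum>x<n. \<Sum>y<m. P $$ (x, y))"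
proof -
  have "(\<Sum>j<m. marg_Y n m P $ j) = (\<Sum>y<m. \<Sum>x<n. P $$ (x, y))"
    unfolding marg_Y_def by simp
  also have "\<dots> = (\<Sum>x<n. \<Sum>y<m. P $$ (x, y))" by (rule sum.swap)
  finally show ?thesis .
qed

lemma in_simplex_if_feasible:
  fixes P U S V :: "real mat"
  assumes svd: "is_svd n m (cond_XY n m P) U S V" "n \<le> m"
    and PY_pos: "\<forall>y<m. 0 < marg_Y n m P $ y" and total: "(\<Sum>x<n. \<Sum>y<m. P $$ (x, y)) = 1"
    and w: "w \<in> carrier_vec m" "(\<Sum>j<m. w $ j) = 0"
    and y: "y \<in> carrier_vec m"
      "M_of_V n m V *\<^sub>v y = M_of_V n m V *\<^sub>v marg_Y n m P + \<epsilon> \<cdot>\<^sub>v (M_of_V n m V *\<^sub>v w)"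
      "\<forall>j<m. 0 \<le> y $ j"
  shows "in_simplex m y"
proof -
  define A where "A = cond_XY n m P"
  define M where "M = M_of_V n m V"
  define B where "B = U * mat n n (\<lambda>(i, j). S $$ (i, j))"
  define PY where "PY = marg_Y n m P"
  have B: "B \<in> carrier_mat n n" using svd(1) unfolding is_svd_def B_def by auto
  have M: "M \<in> carrier_mat n m" unfolding M_def M_of_V_def by simp
  have A: "A \<in> carrier_mat n m" unfolding A_def cond_XY_def by simp
  have PY: "PY \<in> carrier_vec m" unfolding PY_def marg_Y_def by simp
  have A_col_sum: "\<forall>j<m. (\<Sum>i<n. A $$ (i, j)) = 1"
    unfolding A_def using cond_XY_col_stochastic[OF PY_pos] .
  have "A *\<^sub>v y = B *\<^sub>v (M *\<^sub>v y)"
    using svd_eq_mult_M_of_V[OF svd] B M y(1) unfolding A_def B_def M_def by simp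
  also have "\<dots> = A *\<^sub>v PY + \<epsilon> \<cdot>\<^sub>v (A *\<^sub>v w)"
    using svd_eq_mult_M_of_V[OF svd] y(2) B M PY w(1)
    unfolding A_def B_def M_def PY_def by (simp add: mult_add_distrib_mat_vec mult_mat_vec)
  finally have Ay: "A *\<^sub>v y = A *\<^sub>v PY + \<epsilon> \<cdot>\<^sub>v (A *\<^sub>v w)" .
  have "(\<Sum>j<m. y $ j) = (\<Sum>i<n. (A *\<^sub>v y) $ i)"
    using sum_mult_mat_vec_col_stochastic[OF A y(1) A_col_sum] by simp
  also have "\<dots> = (\<Sum>i<n. (A *\<^sub>v PY) $ i) + \<epsilon> * (\<Sum>i<n. (A *\<^sub>v w) $ i)"
    unfolding Ay sum_distrib_left sum.distrib[symmetric] using A by (intro sum.cong) auto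
  also have "\<dots> = 1"
    using sum_mult_mat_vec_col_stochastic[OF A _ A_col_sum] PY w sum_marg_Y total
    unfolding PY_def by simp
  finally show ?thesis using y(1,3) unfolding in_simplex_def by simp
qed

lemma in_simplex_limit:
  assumes t: "t \<in> carrier_vec n" and d: "d \<in> carrier_vec n"
    and ev: "\<forall>\<^sub>F \<epsilon> in at_right 0. in_simplex n (t + \<epsilon> \<cdot>\<^sub>v d)"
  shows "in_simplex n t" "(\<Sum>i<n. d $ i) = 0"
proof -
  have "\<forall>\<^sub>F \<epsilon> in at_right 0. (\<forall>i<n. 0 \<le> t $ i + \<epsilon> * d $ i) \<and> (\<Sum>i<n. t $ i) + \<epsilon> * (\<Sum>i<n. d $ i) = 1"
    using ev
  proof eventually_elim
    case (elim \<epsilon>)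
    have "(\<Sum>i<n. (t + \<epsilon> \<cdot>\<^sub>v d) $ i) = (\<Sum>i<n. t $ i) + \<epsilon> * (\<Sum>i<n. d $ i)"
      using t d by (simp add: sum.distrib sum_distrib_left)
    then show ?case using elim t d unfolding in_simplex_def by auto
  qed
  then have ev': "\<forall>\<^sub>F \<epsilon> in at_right 0. \<forall>i<n. 0 \<le> t $ i + \<epsilon> * d $ i"
    and ev_sum: "\<forall>\<^sub>F \<epsilon> in at_right 0. (\<Sum>i<n. t $ i) + \<epsilon> * (\<Sum>i<n. d $ i) = 1"
    by (auto elim: eventually_mono)
  obtain b :: real where "0 < b" and b: "\<And>\<epsilon>. 0 < \<epsilon> \<Longrightarrow> \<epsilon> < b \<Longrightarrow> (\<Sum>i<n. t $ i) + \<epsilon> * (\<Sum>i<n. d $ i) = 1"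
    using ev_sum by (auto simp: eventually_at_right_field)
  have "(\<Sum>i<n. t $ i) + b / 2 * (\<Sum>i<n. d $ i) = 1" "(\<Sum>i<n. t $ i) + b / 4 * (\<Sum>i<n. d $ i) = 1"
    using b[of "b / 2"] b[of "b / 4"] \<open>0 < b\<close> by simp_all
  then have "(b / 2 - b / 4) * (\<Sum>i<n. d $ i) = 0" unfolding left_diff_distrib by linarith
  then show sum_d: "(\<Sum>i<n. d $ i) = 0" using \<open>0 < b\<close> by simp
  have nonneg: "0 \<le> t $ i" if "i < n" for i
  proof (rule tendsto_lowerbound)
    show "((\<lambda>\<epsilon>. t $ i + \<epsilon> * d $ i) \<longlongrightarrow> t $ i) (at_right 0)"
      by (auto intro!: tendsto_eq_intros)
    show "\<forall>\<^sub>F \<epsilon> in at_right 0. 0 \<le> t $ i + \<epsilon> * d $ i" using ev' that by (auto elim: eventually_mono)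
  qed simp
  show "in_simplex n t"
    using b[of "b / 2"] \<open>0 < b\<close> sum_d nonneg t unfolding in_simplex_def by simp
qed

lemma xlnx_first_order:
  fixes a b :: real
  assumes "0 < a"
  shows "(\<lambda>\<epsilon>. (a + \<epsilon> * b) * ln (a + \<epsilon> * b) - a * ln a - \<epsilon> * (b * (ln a + 1))) \<in> o[at 0](\<lambda>\<epsilon>. \<epsilon>)"
proof (rule smalloI_tendsto)
  define F where "F = (\<lambda>x::real. (a + x * b) * ln (a + x * b))"
  have "(F has_field_derivative b * (ln a + 1)) (at 0)"
    unfolding F_def using assms by (auto intro!: derivative_eq_intros simp: field_simps)
  then have "((\<lambda>\<epsilon>. (F \<epsilon> - F 0) / (\<epsilon> - 0)) \<longlongrightarrow> b * (ln a + 1)) (at 0)"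
    using has_field_derivative_iff by blast
  from tendsto_diff[OF this tendsto_const[of "b * (ln a + 1)"]]
  have "((\<lambda>\<epsilon>. (F \<epsilon> - F 0) / \<epsilon> - b * (ln a + 1)) \<longlongrightarrow> 0) (at 0)" by simp
  then show "((\<lambda>\<epsilon>. ((a + \<epsilon> * b) * ln (a + \<epsilon> * b) - a * ln a - \<epsilon> * (b * (ln a + 1))) / \<epsilon>) \<longlongrightarrow> 0) (at 0)"
    by (rule Lim_transform_eventually) (auto simp: eventually_at_filter F_def field_simps)
  show "\<forall>\<^sub>F \<epsilon> in at 0. (\<epsilon>::real) \<noteq> 0" by (simp add: eventually_at_filter)
qed

lemma entropy_embed_on_first_order:
  fixes t d :: "real vec"
  assumes \<Omega>: "\<Omega> \<subseteq> {..<m}" "card \<Omega> = n"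
    and t: "t \<in> carrier_vec n" "\<forall>i<n. 0 < t $ i" and d: "d \<in> carrier_vec n" "(\<Sum>i<n. d $ i) = 0"
  shows "(\<lambda>\<epsilon>. entropy (embed_on m \<Omega> (t + \<epsilon> \<cdot>\<^sub>v d))
      + (vec n (\<lambda>i. ln (t $ i)) \<bullet> t + \<epsilon> * (vec n (\<lambda>i. ln (t $ i)) \<bullet> d))) \<in> o[at 0](\<lambda>\<epsilon>. \<epsilon>)"
proof -
  define r where "r i \<epsilon> = (t $ i + \<epsilon> * d $ i) * ln (t $ i + \<epsilon> * d $ i) - t $ i * ln (t $ i)
    - \<epsilon> * (d $ i * (ln (t $ i) + 1))" for i \<epsilon>
  have small: "(\<lambda>\<epsilon>. - (\<Sum>i<n. r i \<epsilon>)) \<in> o[at 0](\<lambda>\<epsilon>. \<epsilon>)"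
    using xlnx_first_order t(2) unfolding r_def by (auto intro!: big_sum_in_smallo)
  have "\<forall>\<^sub>F \<epsilon> in at 0. \<forall>i\<in>{..<n}. 0 < t $ i + \<epsilon> * d $ i"
  proof (rule eventually_ball_finite[OF finite_lessThan], intro ballI)
    fix i assume "i \<in> {..<n}"
    moreover have "((\<lambda>\<epsilon>. t $ i + \<epsilon> * d $ i) \<longlongrightarrow> t $ i) (at 0)"
      by (auto intro!: tendsto_eq_intros)
    ultimately show "\<forall>\<^sub>F \<epsilon> in at 0. 0 < t $ i + \<epsilon> * d $ i"
      using t(2) by (intro order_tendstoD) auto
  qed
  then have "\<forall>\<^sub>F \<epsilon> in at 0. - (\<Sum>i<n. r i \<epsilon>) = entropy (embed_on m \<Omega> (t + \<epsilon> \<cdot>\<^sub>v d))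
      + (vec n (\<lambda>i. ln (t $ i)) \<bullet> t + \<epsilon> * (vec n (\<lambda>i. ln (t $ i)) \<bullet> d))"
  proof eventually_elim
    case (elim \<epsilon>)
    have "entropy (embed_on m \<Omega> (t + \<epsilon> \<cdot>\<^sub>v d)) = - (\<Sum>i<n. (t $ i + \<epsilon> * d $ i) * ln (t $ i + \<epsilon> * d $ i))"
      unfolding entropy_embed_on[OF \<Omega>] using elim t d by (intro arg_cong[where f = uminus] sum.cong) auto
    moreover have "vec n (\<lambda>i. ln (t $ i)) \<bullet> t = (\<Sum>i<n. t $ i * ln (t $ i))"
      and "vec n (\<lambda>i. ln (t $ i)) \<bullet> d = (\<Sum>i<n. d $ i * ln (t $ i))"
      using t d unfolding scalar_prod_def by (auto simp: lessThan_atLeast0 mult.commute intro!: sum.cong)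
    moreover have "(\<Sum>i<n. r i \<epsilon>) = (\<Sum>i<n. (t $ i + \<epsilon> * d $ i) * ln (t $ i + \<epsilon> * d $ i))
        - (\<Sum>i<n. t $ i * ln (t $ i)) - \<epsilon> * (\<Sum>i<n. d $ i * ln (t $ i)) - \<epsilon> * (\<Sum>i<n. d $ i)"
      unfolding r_def by (simp add: sum_subtractf sum.distrib sum_distrib_left algebra_simps)
    ultimately show ?case using d(2) by simp
  qed
  then have "(\<lambda>\<epsilon>. - (\<Sum>i<n. r i \<epsilon>)) \<in> o[at 0](\<lambda>\<epsilon>. \<epsilon>) \<longleftrightarrow> ?thesis"
    by (rule landau_o.small.in_cong)
  then show ?thesis using small by blast
qed

theorem lemma4:
  fixes n m :: nat and PXY U S V :: "real mat" and \<Omega> :: "nat set" and J :: "real vec"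
  assumes "0 < n" and "n < m"
    and PXY: "PXY \<in> carrier_mat n m" "\<forall>x<n. \<forall>y<m. 0 \<le> PXY $$ (x, y)"
      "(\<Sum>x<n. \<Sum>y<m. PXY $$ (x, y)) = 1"
    and PX_pos: "\<forall>x<n. 0 < marg_X n m PXY $ x"
    and PY_pos: "\<forall>y<m. 0 < marg_Y n m PXY $ y"
    and rank: "vec_space.rank n (cond_XY n m PXY :: real mat) = n"
    and P1_inv: "invertible_mat (col_sub (cond_XY n m PXY) {..<n})"
    and svd: "is_svd n m (cond_XY n m PXY) U S V"
    and H: "in_H n m PXY (M_of_V n m V)"
    and \<Omega>: "\<Omega> \<subseteq> {..<m}" "card \<Omega> = n" "invertible_mat (col_sub (M_of_V n m V) \<Omega>)"
    and J: "J \<in> carrier_vec n" "(\<Sum>x<n. J $ x) = 0" "(\<Sum>x<n. \<bar>J $ x\<bar>) \<le> 1"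
    and extreme: "\<forall>\<^sub>F \<epsilon> in at_right 0.
       extreme_pt
         {y \<in> carrier_vec m.
            M_of_V n m V *\<^sub>v y = M_of_V n m V *\<^sub>v marg_Y n m PXY
              + \<epsilon> \<cdot>\<^sub>v (M_of_V n m V *\<^sub>v
                   vec m (\<lambda>j. if j < n then (mat_inv (col_sub (cond_XY n m PXY) {..<n}) *\<^sub>v J) $ j else 0))
            \<and> (\<forall>j<m. 0 \<le> y $ j)}
         (embed_on m \<Omega>
            (mat_inv (col_sub (M_of_V n m V) \<Omega>) *\<^sub>v (M_of_V n m V *\<^sub>v marg_Y n m PXY)
             + \<epsilon> \<cdot>\<^sub>v (mat_inv (col_sub (M_of_V n m V) \<Omega>) *\<^sub>v (M_of_V n m V *\<^sub>v
                 vec m (\<lambda>j. if j < n then (mat_inv (col_sub (cond_XY n m PXY) {..<n}) *\<^sub>v J) $ j else 0)))))"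
  shows "(\<lambda>\<epsilon>. entropy
            (embed_on m \<Omega>
              (mat_inv (col_sub (M_of_V n m V) \<Omega>) *\<^sub>v (M_of_V n m V *\<^sub>v marg_Y n m PXY)
               + \<epsilon> \<cdot>\<^sub>v (mat_inv (col_sub (M_of_V n m V) \<Omega>) *\<^sub>v (M_of_V n m V *\<^sub>v
                   vec m (\<lambda>j. if j < n then (mat_inv (col_sub (cond_XY n m PXY) {..<n}) *\<^sub>v J) $ j else 0)))))
          + ((vec n (\<lambda>i. ln ((mat_inv (col_sub (M_of_V n m V) \<Omega>) *\<^sub>v (M_of_V n m V *\<^sub>v marg_Y n m PXY)) $ i)))
               \<bullet> (mat_inv (col_sub (M_of_V n m V) \<Omega>) *\<^sub>v (M_of_V n m V *\<^sub>v marg_Y n m PXY))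
             + \<epsilon> * ((vec n (\<lambda>j. vec n (\<lambda>i. ln ((mat_inv (col_sub (M_of_V n m V) \<Omega>) *\<^sub>v (M_of_V n m V *\<^sub>v marg_Y n m PXY)) $ i))
                         \<bullet> col (mat_inv (col_sub (M_of_V n m V) \<Omega>) * col_sub (M_of_V n m V) {..<n}
                                * mat_inv (col_sub (cond_XY n m PXY) {..<n})) j))
                     \<bullet> J)))
         \<in> o[at_right 0](\<lambda>\<epsilon>. \<epsilon>)"
proof -
  define M where "M = M_of_V n m V"
  define P1 where "P1 = col_sub (cond_XY n m PXY) {..<n}"
  define w where "w = vec m (\<lambda>j. if j < n then (mat_inv P1 *\<^sub>v J) $ j else 0)"
  define B where "B = mat_inv (col_sub M \<Omega>)"
  define t where "t = B *\<^sub>v (M *\<^sub>v marg_Y n m PXY)"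
  define d where "d = B *\<^sub>v (M *\<^sub>v w)"
  define L where "L = vec n (\<lambda>i. ln (t $ i))"
  note defs = M_def[symmetric] P1_def[symmetric] w_def[symmetric] B_def[symmetric]
    t_def[symmetric] d_def[symmetric] L_def[symmetric]
  have C: "cond_XY n m PXY \<in> carrier_mat n m" by (simp add: cond_XY_def)
  have M: "M \<in> carrier_mat n m" unfolding M_def M_of_V_def by simp
  have P1: "P1 \<in> carrier_mat n n" unfolding P1_def using col_sub_carrier[OF C] \<open>n < m\<close> by simp
  have B: "B \<in> carrier_mat n n"
    unfolding B_def using mat_inv_correct(1)[OF \<Omega>(3)[folded M_def] col_sub_carrier[OF M \<Omega>(1,2)]] .
  have w: "w \<in> carrier_vec m" unfolding w_def by simp
  have t: "t \<in> carrier_vec n" and d: "d \<in> carrier_vec n"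
    unfolding t_def d_def using B M w by (auto simp: marg_Y_def)
  have "\<forall>j<n. (\<Sum>i<n. P1 $$ (i, j)) = 1"
    unfolding P1_def using col_stochastic_col_sub[OF C _ _ cond_XY_col_stochastic[OF PY_pos]] \<open>n < m\<close> by simp
  then have sum_w: "(\<Sum>j<m. w $ j) = 0"
    using sum_mat_inv_mult_vec_col_stochastic[OF P1 P1_inv[folded P1_def] _ J(1)] J(2) \<open>n < m\<close>
      sum_zero_extend[where g = "\<lambda>j. (mat_inv P1 *\<^sub>v J) $ j", of n m]
    unfolding w_def by simp
  have "\<forall>\<^sub>F \<epsilon> in at_right 0. in_simplex n (t + \<epsilon> \<cdot>\<^sub>v d)"
    using extreme[unfolded defs]
  proof eventually_elim
    case (elim \<epsilon>)
    then have "in_simplex m (embed_on m \<Omega> (t + \<epsilon> \<cdot>\<^sub>v d))"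
      using in_simplex_if_feasible[OF svd _ PY_pos PXY(3) w sum_w] \<open>n < m\<close>
      unfolding extreme_pt_def M_def by simp
    then show ?case using in_simplex_embed_on[OF \<Omega>(1,2)] t d by simp
  qed
  note simplex = in_simplex_limit[OF t d this]
  have t_pos: "\<forall>i<n. 0 < t $ i"
    using H \<Omega> simplex(1) unfolding in_H_def Let_def t_def B_def M_def by blast
  have "vec n (\<lambda>j. L \<bullet> col (B * col_sub M {..<n} * mat_inv P1) j) \<bullet> J = L \<bullet> d"
    using scalar_prod_cols_mult_col_sub[OF _ B M mat_inv_correct(1)[OF P1_inv[folded P1_def] P1] J(1)] \<open>n < m\<close>
    unfolding L_def d_def w_def by simp
  moreover have "(\<lambda>\<epsilon>. entropy (embed_on m \<Omega> (t + \<epsilon> \<cdot>\<^sub>v d)) + (L \<bullet> t + \<epsilon> * (L \<bullet> d))) \<in> o[at 0](\<lambda>\<epsilon>. \<epsilon>)"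
    unfolding L_def using entropy_embed_on_first_order[OF \<Omega>(1,2) t t_pos d simplex(2)] .
  ultimately show ?thesis
    unfolding defs by (auto intro: landau_o.small.filter_mono[OF at_le, of "{0<..}"])
qed

end
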